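(* For every nice graph $G$ with maximum degree $\Delta=\Delta(G)$, $\chi'_{qm\Sigma}(G)\le \left\lceil \frac{3\Delta+4}{2}\right\rceil$.
   Context: All graphs are simple and finite. A $k$-edge-coloring of $G$ is any map $c:E(G)\to\{1,\dots,k\}$ (adjacent edges may share colors). It induces $\sigma_c(v)=\sum_{u\in N(v)}c(vu)$. The coloring is neighbor sum distinguishing (NSD) if $\sigma_c(u)\ne\sigma_c(v)$ for every edge $uv$. It is quasi-majority if every vertex $v$ is incident to at most $\lceil d(v)/2\rceil$ edges of each single color. $\chi'_{qm\Sigma}(G)$ denotes the least $k$ such that $G$ has a $k$-edge-coloring that is both quasi-majority and NSD. A graph is nice if it has no connected component isomorphic to $K_2$. *)

theory Defs
  imports Complex_Main
begin

definition simple_graph :: "'a set \<Rightarrow> ('a \<Rightarrow> 'a \<Rightarrow> bool) \<Rightarrow> bool" where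
  "simple_graph V E \<longleftrightarrow> finite V \<and> (\<forall>u v. E u v \<longrightarrow> u \<in> V \<and> v \<in> V)
     \<and> (\<forall>u v. E u v \<longrightarrow> E v u) \<and> (\<forall>v. \<not> E v v)"

definition edges :: "'a set \<Rightarrow> ('a \<Rightarrow> 'a \<Rightarrow> bool) \<Rightarrow> 'a set set" where
  "edges V E = {{u, v} | u v. u \<in> V \<and> v \<in> V \<and> E u v}"

definition nbrs :: "'a set \<Rightarrow> ('a \<Rightarrow> 'a \<Rightarrow> bool) \<Rightarrow> 'a \<Rightarrow> 'a set" where
  "nbrs V E v = {u \<in> V. E v u}"

definition deg :: "'a set \<Rightarrow> ('a \<Rightarrow> 'a \<Rightarrow> bool) \<Rightarrow> 'a \<Rightarrow> nat" where
  "deg V E v = card (nbrs V E v)"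

definition max_deg :: "'a set \<Rightarrow> ('a \<Rightarrow> 'a \<Rightarrow> bool) \<Rightarrow> nat" where
  "max_deg V E = Max (insert 0 (deg V E ` V))"

text \<open>Nice: no connected component isomorphic to K2, i.e. no edge uv with both
endpoints of degree 1.\<close>
definition nice :: "'a set \<Rightarrow> ('a \<Rightarrow> 'a \<Rightarrow> bool) \<Rightarrow> bool" where
  "nice V E \<longleftrightarrow> \<not> (\<exists>u v. E u v \<and> deg V E u = 1 \<and> deg V E v = 1)"

definition edge_coloring :: "'a set \<Rightarrow> ('a \<Rightarrow> 'a \<Rightarrow> bool) \<Rightarrow> nat \<Rightarrow> ('a set \<Rightarrow> nat) \<Rightarrow> bool" where
  "edge_coloring V E k c \<longleftrightarrow> (\<forall>e \<in> edges V E. c e \<in> {1..k})"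

definition sigma :: "'a set \<Rightarrow> ('a \<Rightarrow> 'a \<Rightarrow> bool) \<Rightarrow> ('a set \<Rightarrow> nat) \<Rightarrow> 'a \<Rightarrow> nat" where
  "sigma V E c v = (\<Sum>u \<in> nbrs V E v. c {v, u})"

definition nsd :: "'a set \<Rightarrow> ('a \<Rightarrow> 'a \<Rightarrow> bool) \<Rightarrow> ('a set \<Rightarrow> nat) \<Rightarrow> bool" where
  "nsd V E c \<longleftrightarrow> (\<forall>u v. E u v \<longrightarrow> sigma V E c u \<noteq> sigma V E c v)"

definition quasi_majority :: "'a set \<Rightarrow> ('a \<Rightarrow> 'a \<Rightarrow> bool) \<Rightarrow> ('a set \<Rightarrow> nat) \<Rightarrow> bool" where
  "quasi_majority V E c \<longleftrightarrow> (\<forall>v \<in> V. \<forall>i::nat.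
     card {u \<in> nbrs V E v. c {v, u} = i} \<le> nat \<lceil>real (deg V E v) / 2\<rceil>)"

definition qm_nsd_colorable :: "'a set \<Rightarrow> ('a \<Rightarrow> 'a \<Rightarrow> bool) \<Rightarrow> nat \<Rightarrow> bool" where
  "qm_nsd_colorable V E k \<longleftrightarrow>
     (\<exists>c. edge_coloring V E k c \<and> quasi_majority V E c \<and> nsd V E c)"

definition chi_qm_sigma :: "'a set \<Rightarrow> ('a \<Rightarrow> 'a \<Rightarrow> bool) \<Rightarrow> nat" where
  "chi_qm_sigma V E = (LEAST k. qm_nsd_colorable V E k)"

end

theory Submission
  imports Defs
begin

text \<open>The colouring is built by shrinking a set W of unfinished vertices, initially the non-isolated
  ones. Such a W either loses a vertex w and keeps this
  shape, or has a component on three vertices a, r, b: a path with centre r or a triangle.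

  To drop w, only one edge wp from w into W needs a careful colour: the sum at w must avoid the at
  most \<Delta> - 1 final sums of the other processed neighbours of w, and at most two colours are
  saturated at w or p, so \<Delta> + 2 colours suffice. To drop a three-vertex component, the edge ab (if
  present) is coloured first and then ra and rb together. The sums at a, b and r must avoid about
  3\<Delta> values in all, and since the sums min A + y and x + max B (x \<in> A, y \<in> B) form a chain of
  card A + card B - 1 distinct values, a pair of colours achieving this exists among
  \<lceil>(3\<Delta> + 4) / 2\<rceil> colours; quasi-majority at r excludes at most two further colours.\<close>

section \<open>Sums of two sets of naturals\<close>

lemma exists_sum_notin:
  fixes A B F :: "nat set" and R :: "nat \<Rightarrow> nat \<Rightarrow> bool"
  assumes fin: "finite A" "finite B" "finite F" and ne: "A \<noteq> {}" "B \<noteq> {}"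
    and exclA: "\<And>a. card {b \<in> B. \<not> R a b} \<le> k"
    and exclB: "\<And>b. card {a \<in> A. \<not> R a b} \<le> k"
    and card: "card F + 2 * k + 2 \<le> card A + card B"
  shows "\<exists>a\<in>A. \<exists>b\<in>B. R a b \<and> a + b \<notin> F"
proof -
  define a0 where "a0 = Min A"
  define b0 where "b0 = Max B"
  have a0: "a0 \<in> A" "\<And>a. a \<in> A \<Longrightarrow> a0 \<le> a" unfolding a0_def using fin ne by auto
  have b0: "b0 \<in> B" "\<And>b. b \<in> B \<Longrightarrow> b \<le> b0" unfolding b0_def using fin ne by auto
  define S1 where "S1 = (\<lambda>b. a0 + b) ` {b \<in> B. R a0 b}"
  define S2 where "S2 = (\<lambda>a. a + b0) ` {a \<in> A. R a b0}"
  have "card B \<le> card {b \<in> B. R a0 b} + card {b \<in> B. \<not> R a0 b}"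
    using fin by (subst card_Un_disjoint[symmetric]) (auto intro: card_mono)
  then have c1: "card B \<le> card S1 + k"
    unfolding S1_def using exclA[of a0] by (subst card_image) (auto simp: inj_on_def)
  have "card A \<le> card {a \<in> A. R a b0} + card {a \<in> A. \<not> R a b0}"
    using fin by (subst card_Un_disjoint[symmetric]) (auto intro: card_mono)
  then have c2: "card A \<le> card S2 + k"
    unfolding S2_def using exclB[of b0] by (subst card_image) (auto simp: inj_on_def)
  have "S1 \<inter> S2 \<subseteq> {a0 + b0}"
    unfolding S1_def S2_def using a0 b0 by force
  then have "card (S1 \<inter> S2) \<le> 1"
    using card_mono[of "{a0 + b0}"] by fastforce
  moreover have "card S1 + card S2 = card (S1 \<union> S2) + card (S1 \<inter> S2)"
    unfolding S1_def S2_def using fin by (intro card_Un_Int) auto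
  ultimately have "card F < card (S1 \<union> S2)" using c1 c2 card by linarith
  then obtain s where "s \<in> S1 \<union> S2" "s \<notin> F"
    using card_mono[OF fin(3), of "S1 \<union> S2"] by (meson not_le subsetI)
  then show ?thesis unfolding S1_def S2_def using a0 b0 by auto
qed

section \<open>Edge sums and colour counts\<close>

lemma simple_graph_finite: "simple_graph V E \<Longrightarrow> finite V"
  unfolding simple_graph_def by simp

lemma simple_graph_vertices: "simple_graph V E \<Longrightarrow> E u v \<Longrightarrow> u \<in> V \<and> v \<in> V"
  unfolding simple_graph_def by blast

lemma simple_graph_sym: "simple_graph V E \<Longrightarrow> E u v \<Longrightarrow> E v u"
  unfolding simple_graph_def by blast

lemma simple_graph_irrefl: "simple_graph V E \<Longrightarrow> \<not> E v v"
  unfolding simple_graph_def by blast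

lemma finite_nbrs: "simple_graph V E \<Longrightarrow> finite (nbrs V E v)"
  unfolding nbrs_def simple_graph_def by simp

lemma mem_nbrs_iff: "simple_graph V E \<Longrightarrow> u \<in> nbrs V E v \<longleftrightarrow> E v u"
  unfolding nbrs_def using simple_graph_vertices by fastforce

lemma deg_le_max_deg:
  assumes "simple_graph V E" "v \<in> V"
  shows "deg V E v \<le> max_deg V E"
proof -
  have "finite (insert 0 (deg V E ` V))" using simple_graph_finite[OF assms(1)] by simp
  then show ?thesis unfolding max_deg_def using assms(2) by (simp add: Max_ge)
qed

lemma card_le_deg:
  assumes "simple_graph V E" "U \<subseteq> nbrs V E v"
  shows "card U \<le> deg V E v"
  unfolding deg_def using card_mono[OF finite_nbrs[OF assms(1)] assms(2)] .

lemma sigma_cong: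
  assumes "\<And>u. u \<in> nbrs V E v \<Longrightarrow> c' {v, u} = c {v, u}"
  shows "sigma V E c' v = sigma V E c v"
  unfolding sigma_def using assms by (intro sum.cong) auto

lemma other_endpoint:
  assumes sg: "simple_graph V E" and "E u v" and "t = u \<or> t = v"
  obtains w where "w \<in> nbrs V E t" "{t, w} = {u, v}" "\<And>z. z \<noteq> w \<Longrightarrow> {t, z} \<noteq> {u, v}"
proof
  have "u \<noteq> v" using assms simple_graph_irrefl[OF sg] by blast
  then show "\<And>z. z \<noteq> (if t = u then v else u) \<Longrightarrow> {t, z} \<noteq> {u, v}"
    using assms(3) by (auto simp: doubleton_eq_iff)
  show "(if t = u then v else u) \<in> nbrs V E t"
    using assms simple_graph_sym[OF sg] mem_nbrs_iff[OF sg] by auto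
qed (use assms(3) in auto)

lemma sigma_fun_upd:
  assumes sg: "simple_graph V E" and "E u v" and "c {u, v} = 0"
  shows "sigma V E (c({u, v} := x)) t = sigma V E c t + (if t = u \<or> t = v then x else 0)"
proof (cases "t = u \<or> t = v")
  case False
  then have "sigma V E (c({u, v} := x)) t = sigma V E c t"
    by (intro sigma_cong) (auto simp: doubleton_eq_iff)
  then show ?thesis using False by simp
next
  case True
  obtain w where w: "w \<in> nbrs V E t" and tw: "{t, w} = {u, v}" and other: "\<And>z. z \<noteq> w \<Longrightarrow> {t, z} \<noteq> {u, v}"
    using other_endpoint[OF sg assms(2) True] by blast
  have "sigma V E (c({u, v} := x)) t = x + (\<Sum>z \<in> nbrs V E t - {w}. c {t, z})"
    unfolding sigma_def using tw other finite_nbrs[OF sg]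
    by (simp add: sum.remove[OF _ w])
  moreover have "sigma V E c t = (\<Sum>z \<in> nbrs V E t - {w}. c {t, z})"
    unfolding sigma_def using tw assms(3) finite_nbrs[OF sg] by (simp add: sum.remove[OF _ w])
  ultimately show ?thesis using True by simp
qed

definition qm_cap :: "'a set \<Rightarrow> ('a \<Rightarrow> 'a \<Rightarrow> bool) \<Rightarrow> 'a \<Rightarrow> nat" where
  "qm_cap V E v = (deg V E v + 1) div 2"

definition color_count :: "'a set \<Rightarrow> ('a \<Rightarrow> 'a \<Rightarrow> bool) \<Rightarrow> ('a set \<Rightarrow> nat) \<Rightarrow> 'a \<Rightarrow> nat \<Rightarrow> nat" where
  "color_count V E c v i = card {u \<in> nbrs V E v. c {v, u} = i}"

text \<open>Colour 0 marks an uncoloured edge; the quasi-majority bound is imposed on all other colours.\<close>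
definition partial_qm :: "'a set \<Rightarrow> ('a \<Rightarrow> 'a \<Rightarrow> bool) \<Rightarrow> ('a set \<Rightarrow> nat) \<Rightarrow> bool" where
  "partial_qm V E c \<longleftrightarrow> (\<forall>v\<in>V. \<forall>i. i \<noteq> 0 \<longrightarrow> color_count V E c v i \<le> qm_cap V E v)"

lemma qm_cap_eq_ceiling: "nat \<lceil>real (deg V E v) / 2\<rceil> = qm_cap V E v"
  unfolding qm_cap_def by linarith

lemma deg_le_twice_qm_cap: "deg V E v \<le> 2 * qm_cap V E v"
  unfolding qm_cap_def by simp

lemma color_count_fun_upd:
  assumes sg: "simple_graph V E" and "E u v" and "c {u, v} = 0" and "i \<noteq> 0"
  shows "color_count V E (c({u, v} := x)) t i =
    color_count V E c t i + (if (t = u \<or> t = v) \<and> i = x then 1 else 0)"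
proof (cases "t = u \<or> t = v")
  case False
  then have "{z \<in> nbrs V E t. (c({u, v} := x)) {t, z} = i} = {z \<in> nbrs V E t. c {t, z} = i}"
    by (auto simp: doubleton_eq_iff)
  then show ?thesis unfolding color_count_def using False by simp
next
  case True
  obtain w where w: "w \<in> nbrs V E t" and tw: "{t, w} = {u, v}" and other: "\<And>z. z \<noteq> w \<Longrightarrow> {t, z} \<noteq> {u, v}"
    using other_endpoint[OF sg assms(2) True] by blast
  define R where "R = {z \<in> nbrs V E t - {w}. c {t, z} = i}"
  have "{z \<in> nbrs V E t. c {t, z} = i} = R"
    unfolding R_def using tw assms(3,4) by auto
  moreover have "{z \<in> nbrs V E t. (c({u, v} := x)) {t, z} = i} = (if i = x then insert w R else R)"
    unfolding R_def using tw other w by auto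
  moreover have "finite R" "w \<notin> R" unfolding R_def using finite_nbrs[OF sg] by auto
  ultimately show ?thesis unfolding color_count_def using True by simp
qed

lemma sum_color_count_le_deg:
  assumes sg: "simple_graph V E" and S: "finite S" "0 \<notin> S"
    and U: "U \<subseteq> nbrs V E v" "\<And>u. u \<in> U \<Longrightarrow> c {v, u} = 0"
  shows "(\<Sum>i\<in>S. color_count V E c v i) + card U \<le> deg V E v"
proof -
  define C where "C i = {u \<in> nbrs V E v. c {v, u} = i}" for i
  have fin: "\<And>i. finite (C i)" "finite U"
    unfolding C_def using finite_nbrs[OF sg] finite_subset[OF U(1)] by auto
  have "(\<Sum>i\<in>S. color_count V E c v i) = card (\<Union>i\<in>S. C i)"
    unfolding color_count_def C_def[symmetric] using S fin by (subst card_UN_disjoint) (auto simp: C_def)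
  also have "\<dots> + card U = card ((\<Union>i\<in>S. C i) \<union> U)"
    using S U fin by (subst card_Un_disjoint) (auto simp: C_def)
  also have "\<dots> \<le> deg V E v"
    using U by (intro card_le_deg[OF sg]) (auto simp: C_def)
  finally show ?thesis .
qed

lemma unique_saturated_color:
  assumes sg: "simple_graph V E" and "u \<in> nbrs V E v" "c {v, u} = 0"
  obtains s where "\<And>i. i \<noteq> 0 \<Longrightarrow> qm_cap V E v \<le> color_count V E c v i \<Longrightarrow> i = s"
proof -
  have "i = j" if "i \<noteq> 0" "j \<noteq> 0" "qm_cap V E v \<le> color_count V E c v i"
    "qm_cap V E v \<le> color_count V E c v j" for i j
  proof (rule ccontr)
    assume "i \<noteq> j"
    then have "(\<Sum>l\<in>{i, j}. color_count V E c v l) + card {u} \<le> deg V E v"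
      using that assms by (intro sum_color_count_le_deg) auto
    then show False using that \<open>i \<noteq> j\<close> deg_le_twice_qm_cap[of V E v] by simp
  qed
  then show ?thesis using that by metis
qed

lemma partial_qm_fun_upd:
  assumes sg: "simple_graph V E" and e: "E u v" "c {u, v} = 0" and qm: "partial_qm V E c"
    and x: "x \<noteq> 0" "color_count V E c u x < qm_cap V E u" "color_count V E c v x < qm_cap V E v"
  shows "partial_qm V E (c({u, v} := x))"
  unfolding partial_qm_def
proof (intro ballI allI impI)
  fix t and i :: nat assume "t \<in> V" "i \<noteq> 0"
  then show "color_count V E (c({u, v} := x)) t i \<le> qm_cap V E t"
    using color_count_fun_upd[of V E u v c i x t, OF sg e \<open>i \<noteq> 0\<close>] qm x \<open>t \<in> V\<close>
    unfolding partial_qm_def by (cases "(t = u \<or> t = v) \<and> i = x") auto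
qed

text \<open>Besides X, each endpoint forbids at most one saturated colour.\<close>
lemma exists_color_fun_upd:
  assumes sg: "simple_graph V E" and e: "E u v" "c {u, v} = 0" and qm: "partial_qm V E c"
    and X: "finite X" "card X + 3 \<le> K"
  obtains x where "x \<in> {1..K}" "x \<notin> X" "partial_qm V E (c({u, v} := x))"
proof -
  obtain s1 where s1: "\<And>i. i \<noteq> 0 \<Longrightarrow> qm_cap V E u \<le> color_count V E c u i \<Longrightarrow> i = s1"
    using unique_saturated_color[OF sg, of v u c] e mem_nbrs_iff[OF sg] by blast
  obtain s2 where s2: "\<And>i. i \<noteq> 0 \<Longrightarrow> qm_cap V E v \<le> color_count V E c v i \<Longrightarrow> i = s2"
    using unique_saturated_color[OF sg, of u v c] e simple_graph_sym[OF sg] mem_nbrs_iff[OF sg]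
    by (metis insert_commute)
  have "card (X \<union> {s1, s2}) \<le> card X + 2"
    using card_Un_le[of X "{s1, s2}"] card_insert_le_m1[of 2 "{s2}" s1] by simp
  then have "\<not> {1..K} \<subseteq> X \<union> {s1, s2}"
    using X card_mono[of "X \<union> {s1, s2}" "{1..K}"] by auto
  then obtain x where x: "x \<in> {1..K}" "x \<notin> X \<union> {s1, s2}" by blast
  have "x \<noteq> 0" using x by simp
  moreover have "color_count V E c u x < qm_cap V E u"
    using s1[OF \<open>x \<noteq> 0\<close>] x(2) by (metis UnCI insertCI not_le)
  moreover have "color_count V E c v x < qm_cap V E v"
    using s2[OF \<open>x \<noteq> 0\<close>] x(2) by (metis UnCI insertCI not_le)
  ultimately
  have "partial_qm V E (c({u, v} := x))"
    by (rule partial_qm_fun_upd[OF sg e qm])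
  then show ?thesis using that x by blast
qed

section \<open>Peeling induced subgraphs without K1 and K2 components\<close>

definition nbrs_in :: "('a \<Rightarrow> 'a \<Rightarrow> bool) \<Rightarrow> 'a set \<Rightarrow> 'a \<Rightarrow> 'a set" where
  "nbrs_in E W v = {u \<in> W. E v u}"

definition nice_induced :: "('a \<Rightarrow> 'a \<Rightarrow> bool) \<Rightarrow> 'a set \<Rightarrow> bool" where
  "nice_induced E W \<longleftrightarrow> (\<forall>w\<in>W. \<exists>u\<in>W. E w u) \<and>
     (\<forall>x\<in>W. \<forall>y\<in>W. E x y \<longrightarrow> \<not> (card (nbrs_in E W x) = 1 \<and> card (nbrs_in E W y) = 1))"

text \<open>The path a r b spans a component (a P3 or a K3) of the subgraph induced by W.\<close>
definition three_vertex_component :: "('a \<Rightarrow> 'a \<Rightarrow> bool) \<Rightarrow> 'a set \<Rightarrow> 'a \<Rightarrow> 'a \<Rightarrow> 'a \<Rightarrow> bool" where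
  "three_vertex_component E W a r b \<longleftrightarrow> r \<in> W \<and> a \<noteq> b \<and>
     nbrs_in E W r = {a, b} \<and> nbrs_in E W a \<subseteq> {r, b} \<and> nbrs_in E W b \<subseteq> {r, a}"

lemma finite_nbrs_in: "finite W \<Longrightarrow> finite (nbrs_in E W v)"
  unfolding nbrs_in_def by simp

lemma nbrs_in_Diff: "nbrs_in E (W - X) v = nbrs_in E W v - X"
  unfolding nbrs_in_def by auto

lemma card_nbrs_in_ge_1:
  assumes "finite W" "nice_induced E W" "v \<in> W"
  shows "1 \<le> card (nbrs_in E W v)"
  using assms finite_nbrs_in[OF assms(1)] unfolding nice_induced_def nbrs_in_def
  by (metis (mono_tags, lifting) One_nat_def Suc_leI card_gt_0_iff empty_iff mem_Collect_eq)

lemma card_nbrs_in_1E: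
  assumes "card (nbrs_in E W v) = 1" "x \<in> nbrs_in E W v"
  shows "nbrs_in E W v = {x}"
  using assms by (metis card_1_singletonE singletonD)

lemma card_nbrs_in_2E:
  assumes "card (nbrs_in E W v) = 2" "x \<in> nbrs_in E W v"
  obtains y where "y \<noteq> x" "nbrs_in E W v = {x, y}"
proof -
  obtain p q where "p \<noteq> q" "nbrs_in E W v = {p, q}" using assms(1) by (meson card_2_iff)
  then show ?thesis using assms(2) that by (metis insertE insert_commute singletonD)
qed

lemma nice_induced_Diff_singleton:
  assumes sym: "\<And>u v. E u v \<Longrightarrow> E v u" and g: "nice_induced E W"
    and isolated: "\<And>v. v \<in> W - {w} \<Longrightarrow> E v w \<Longrightarrow> 1 \<le> card (nbrs_in E W v - {w})"
    and K2: "\<And>v y. v \<in> W - {w} \<Longrightarrow> E v w \<Longrightarrow> card (nbrs_in E W v - {w}) = 1 \<Longrightarrow>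
              y \<in> W - {w} \<Longrightarrow> E v y \<Longrightarrow> 2 \<le> card (nbrs_in E W y - {w})"
  shows "nice_induced E (W - {w})"
  unfolding nice_induced_def
proof (intro conjI ballI impI)
  fix v assume v: "v \<in> W - {w}"
  show "\<exists>u\<in>W - {w}. E v u"
  proof (cases "E v w")
    case True
    then obtain u where "u \<in> nbrs_in E W v - {w}"
      using isolated[OF v] by (metis card.empty ex_in_conv not_one_le_zero)
    then show ?thesis unfolding nbrs_in_def by auto
  next
    case False
    obtain u where "u \<in> W" "E v u" using g v unfolding nice_induced_def by blast
    then show ?thesis using False by (metis DiffI singletonD)
  qed
next
  fix x y assume x: "x \<in> W - {w}" and y: "y \<in> W - {w}" and xy: "E x y"
  show "\<not> (card (nbrs_in E (W - {w}) x) = 1 \<and> card (nbrs_in E (W - {w}) y) = 1)"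
  proof
    assume "card (nbrs_in E (W - {w}) x) = 1 \<and> card (nbrs_in E (W - {w}) y) = 1"
    then have hx: "card (nbrs_in E W x - {w}) = 1" and hy: "card (nbrs_in E W y - {w}) = 1"
      unfolding nbrs_in_Diff by auto
    have "\<not> E x w" using K2[OF x _ hx y xy] hy by auto
    moreover have "\<not> E y w" using K2[OF y _ hy x sym[OF xy]] hx by auto
    ultimately have "nbrs_in E W x - {w} = nbrs_in E W x" "nbrs_in E W y - {w} = nbrs_in E W y"
      unfolding nbrs_in_def by auto
    then show False using g x y xy hx hy unfolding nice_induced_def by auto
  qed
qed

lemma nice_induced_peel_leaf:
  assumes sym: "\<And>u v. E u v \<Longrightarrow> E v u" and irr: "\<And>v. \<not> E v v"
    and fin: "finite W" and g: "nice_induced E W"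
    and w: "w \<in> W" "card (nbrs_in E W w) = 1"
  shows "(\<exists>v\<in>W. nice_induced E (W - {v})) \<or> (\<exists>a r b. three_vertex_component E W a r b)"
proof -
  obtain x where wx: "nbrs_in E W w = {x}" using w(2) by (rule card_1_singletonE)
  then have x: "x \<in> W" "E w x" unfolding nbrs_in_def by auto
  have only_x: "\<And>v. v \<in> W \<Longrightarrow> E v w \<Longrightarrow> v = x"
    using wx sym unfolding nbrs_in_def by blast
  have w_x: "w \<in> nbrs_in E W x" unfolding nbrs_in_def using w(1) sym[OF x(2)] by simp
  have dx: "card (nbrs_in E W x) \<noteq> 1" using g w x unfolding nice_induced_def by blast
  have dx': "card (nbrs_in E W x - {w}) = card (nbrs_in E W x) - 1" using w_x fin finite_nbrs_in by simp
  have "1 \<le> card (nbrs_in E W x)" by (rule card_nbrs_in_ge_1[OF fin g x(1)])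
  then consider "3 \<le> card (nbrs_in E W x)" | "card (nbrs_in E W x) = 2" using dx by linarith
  then show ?thesis
  proof cases
    case 1
    have "nice_induced E (W - {w})"
      using 1 dx' only_x by (intro nice_induced_Diff_singleton[OF sym g]) auto
    then show ?thesis using w by blast
  next
    case 2
    obtain y where y: "y \<noteq> w" and xy: "nbrs_in E W x = {w, y}" by (rule card_nbrs_in_2E[OF 2 w_x])
    have yW: "y \<in> W" "E x y" using xy unfolding nbrs_in_def by auto
    have y_w: "w \<notin> nbrs_in E W y"
      using only_x yW irr x(2) unfolding nbrs_in_def by (metis mem_Collect_eq sym)
    show ?thesis
    proof (cases "2 \<le> card (nbrs_in E W y)")
      case True
      have "nice_induced E (W - {w})"
      proof (rule nice_induced_Diff_singleton[OF sym g])
        fix v assume "v \<in> W - {w}" "E v w"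
        then show "1 \<le> card (nbrs_in E W v - {w})" using only_x[of v] dx' 2 by simp
      next
        fix v z assume "v \<in> W - {w}" "E v w" "z \<in> W - {w}" "E v z"
        then have "z = y" using only_x xy unfolding nbrs_in_def by blast
        then show "2 \<le> card (nbrs_in E W z - {w})" using y_w True by simp
      qed
      then show ?thesis using w by blast
    next
      case False
      then have "card (nbrs_in E W y) = 1" using card_nbrs_in_ge_1[OF fin g yW(1)] by linarith
      moreover have "x \<in> nbrs_in E W y" unfolding nbrs_in_def using x(1) sym[OF yW(2)] by simp
      ultimately have "nbrs_in E W y = {x}" by (rule card_nbrs_in_1E)
      then have "three_vertex_component E W w x y"
        unfolding three_vertex_component_def using wx xy y x(1) by auto
      then show ?thesis by blast
    qed
  qed
qed

lemma nice_induced_peel_min_deg_2: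
  assumes sym: "\<And>u v. E u v \<Longrightarrow> E v u" and irr: "\<And>v. \<not> E v v"
    and fin: "finite W" and g: "nice_induced E W"
    and d2: "\<And>v. v \<in> W \<Longrightarrow> 2 \<le> card (nbrs_in E W v)" and w: "w \<in> W"
  shows "(\<exists>v\<in>W. nice_induced E (W - {v})) \<or> (\<exists>a r b. three_vertex_component E W a r b)"
proof (cases "nice_induced E (W - {w})")
  case True
  then show ?thesis using w by blast
next
  case False
  have mem: "\<And>u v. u \<in> nbrs_in E W v \<longleftrightarrow> u \<in> W \<and> E v u" unfolding nbrs_in_def by simp
  have rm: "\<And>u v. u \<in> nbrs_in E W v \<Longrightarrow> card (nbrs_in E W v - {u}) = card (nbrs_in E W v) - 1"
    using fin finite_nbrs_in by simp
  \<comment> \<open>w cannot be removed only because it lies on a triangle w v y with v, y of degree 2\<close>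
  obtain v y where v: "v \<in> W - {w}" "E v w" "card (nbrs_in E W v - {w}) = 1"
    and y: "y \<in> W - {w}" "E v y" "card (nbrs_in E W y - {w}) < 2"
  proof -
    have "\<not> (\<forall>v y. v \<in> W - {w} \<longrightarrow> E v w \<longrightarrow> card (nbrs_in E W v - {w}) = 1 \<longrightarrow>
        y \<in> W - {w} \<longrightarrow> E v y \<longrightarrow> 2 \<le> card (nbrs_in E W y - {w}))"
    proof
      assume "\<forall>v y. v \<in> W - {w} \<longrightarrow> E v w \<longrightarrow> card (nbrs_in E W v - {w}) = 1 \<longrightarrow>
        y \<in> W - {w} \<longrightarrow> E v y \<longrightarrow> 2 \<le> card (nbrs_in E W y - {w})"
      moreover have "\<And>v. v \<in> W - {w} \<Longrightarrow> E v w \<Longrightarrow> 1 \<le> card (nbrs_in E W v - {w})"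
        using rm d2 w mem by fastforce
      ultimately have "nice_induced E (W - {w})"
        by (intro nice_induced_Diff_singleton[OF sym g]) blast+
      then show False using False by blast
    qed
    then show ?thesis using that not_le by blast
  qed
  have w_v: "w \<in> nbrs_in E W v" and y_v: "y \<in> nbrs_in E W v" using mem w v y by auto
  have dv: "card (nbrs_in E W v) = 2" using rm[OF w_v] v(3) d2 v(1) by fastforce
  obtain y' where "nbrs_in E W v = {w, y'}" by (rule card_nbrs_in_2E[OF dv w_v])
  then have vwy: "nbrs_in E W v = {w, y}" using y_v y(1) by auto
  have w_y: "w \<in> nbrs_in E W y"
  proof (rule ccontr)
    assume "w \<notin> nbrs_in E W y"
    then have "nbrs_in E W y - {w} = nbrs_in E W y" by simp
    then show False using y(1,3) d2[of y] by simp
  qed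
  have v_y: "v \<in> nbrs_in E W y" using mem v sym[OF y(2)] by blast
  have dy: "card (nbrs_in E W y) = 2" using rm[OF w_y] y(3) d2 y(1) by fastforce
  obtain v' where "nbrs_in E W y = {w, v'}" by (rule card_nbrs_in_2E[OF dy w_y])
  then have ywv: "nbrs_in E W y = {w, v}" using v_y v(1) by auto
  have vy: "v \<noteq> y" using y(2) irr by blast
  have v_w: "v \<in> nbrs_in E W w" and y_w: "y \<in> nbrs_in E W w" using mem v y(1) w_y sym by auto
  show ?thesis
  proof (cases "card (nbrs_in E W w) = 2")
    case True
    obtain y' where "nbrs_in E W w = {v, y'}" by (rule card_nbrs_in_2E[OF True v_w])
    then have "nbrs_in E W w = {v, y}" using y_w vy by auto
    then have "three_vertex_component E W v w y"
      unfolding three_vertex_component_def using vy vwy ywv w by auto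
    then show ?thesis by blast
  next
    case False
    then have dw: "3 \<le> card (nbrs_in E W w)" using d2[OF w] by simp
    have "nice_induced E (W - {v})"
    proof (rule nice_induced_Diff_singleton[OF sym g])
      fix t assume "t \<in> W - {v}" "E t v"
      then have "t = w \<or> t = y" using vwy mem sym by blast
      then show "1 \<le> card (nbrs_in E W t - {v})" using rm[OF v_w] rm[OF v_y] dw dy by auto
    next
      fix t z assume t: "t \<in> W - {v}" "E t v" "card (nbrs_in E W t - {v}) = 1" and z: "z \<in> W - {v}" "E t z"
      then have "t = w \<or> t = y" using vwy mem sym by blast
      then have "t = y" using t(3) rm[OF v_w] dw by auto
      then have "z = w" using ywv z mem by blast
      then show "2 \<le> card (nbrs_in E W z - {v})" using rm[OF v_w] dw by simp
    qed
    then show ?thesis using v by blast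
  qed
qed

lemma nice_induced_peel:
  assumes sym: "\<And>u v. E u v \<Longrightarrow> E v u" and irr: "\<And>v. \<not> E v v"
    and fin: "finite W" and g: "nice_induced E W" and ne: "W \<noteq> {}"
  shows "(\<exists>v\<in>W. nice_induced E (W - {v})) \<or> (\<exists>a r b. three_vertex_component E W a r b)"
proof (cases "\<exists>w\<in>W. card (nbrs_in E W w) = 1")
  case True
  then show ?thesis using nice_induced_peel_leaf[OF sym irr fin g] by blast
next
  case False
  then have "\<And>v. v \<in> W \<Longrightarrow> 2 \<le> card (nbrs_in E W v)"
    using card_nbrs_in_ge_1[OF fin g] by (metis One_nat_def Suc_1 Suc_leI le_neq_implies_less)
  then show ?thesis using nice_induced_peel_min_deg_2[OF sym irr fin g] ne by blast
qed

lemma three_vertex_componentD: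
  assumes "three_vertex_component E W a r b"
  shows "a \<in> W" "r \<in> W" "b \<in> W" "a \<noteq> b" "E r a" "E r b"
  using assms unfolding three_vertex_component_def nbrs_in_def by auto

lemma three_vertex_component_edge:
  assumes sym: "\<And>u v. E u v \<Longrightarrow> E v u" and T: "three_vertex_component E W a r b"
    and e: "E u v" "u \<in> W" "v \<in> W" "u \<in> {a, r, b} \<or> v \<in> {a, r, b}"
  shows "{u, v} = {a, r} \<or> {u, v} = {b, r} \<or> ({u, v} = {a, b} \<and> E a b)"
proof -
  have "{x, y} = {a, r} \<or> {x, y} = {b, r} \<or> ({x, y} = {a, b} \<and> E a b)"
    if xy: "E x y" "y \<in> W" "x \<in> {a, r, b}" for x y
  proof -
    have y: "y \<in> nbrs_in E W x" unfolding nbrs_in_def using xy by simp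
    consider "x = a" | "x = r" | "x = b" using xy(3) by blast
    then show ?thesis
    proof cases
      case 1
      then have "y = r \<or> y = b" using y T unfolding three_vertex_component_def by blast
      then show ?thesis using 1 xy(1) by blast
    next
      case 2
      then have "y = a \<or> y = b" using y T unfolding three_vertex_component_def by blast
      then show ?thesis using 2 by (auto simp: doubleton_eq_iff)
    next
      case 3
      then have "y = r \<or> y = a" using y T unfolding three_vertex_component_def by blast
      then show ?thesis using 3 xy(1) sym by (auto simp: doubleton_eq_iff)
    qed
  qed
  then show ?thesis using e sym[OF e(1)] insert_commute[of u v "{}"] by blast
qed

lemma nice_induced_Diff_component:
  assumes sym: "\<And>u v. E u v \<Longrightarrow> E v u" and g: "nice_induced E W"
    and T: "three_vertex_component E W a r b"
  shows "nice_induced E (W - {a, r, b})"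
proof -
  have apart: "\<not> E v t" if v: "v \<in> W - {a, r, b}" and t: "t \<in> {a, r, b}" for v t
  proof
    assume "E v t"
    then have "v \<in> nbrs_in E W t" using v sym unfolding nbrs_in_def by auto
    moreover have "nbrs_in E W t \<subseteq> {a, r, b}" using t T unfolding three_vertex_component_def by auto
    ultimately show False using v by blast
  qed
  have same: "nbrs_in E (W - {a, r, b}) v = nbrs_in E W v" if "v \<in> W - {a, r, b}" for v
    using apart[OF that] unfolding nbrs_in_def by blast
  have "\<forall>v\<in>W - {a, r, b}. \<exists>u\<in>W - {a, r, b}. E v u"
  proof
    fix v assume v: "v \<in> W - {a, r, b}"
    then have "v \<in> W" by blast
    then obtain u where "u \<in> W" "E v u" using g unfolding nice_induced_def by blast
    then show "\<exists>u\<in>W - {a, r, b}. E v u" using apart[OF v, of u] by blast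
  qed
  moreover have "\<not> (card (nbrs_in E (W - {a, r, b}) x) = 1 \<and> card (nbrs_in E (W - {a, r, b}) y) = 1)"
    if "x \<in> W - {a, r, b}" "y \<in> W - {a, r, b}" "E x y" for x y
  proof -
    have "x \<in> W" "y \<in> W" using that by auto
    then show ?thesis using g that(3) unfolding same[OF that(1)] same[OF that(2)] nice_induced_def by blast
  qed
  ultimately show ?thesis unfolding nice_induced_def by blast
qed

section \<open>Partial colourings\<close>

definition partial_nsd_coloring ::
    "'a set \<Rightarrow> ('a \<Rightarrow> 'a \<Rightarrow> bool) \<Rightarrow> nat \<Rightarrow> 'a set \<Rightarrow> ('a set \<Rightarrow> nat) \<Rightarrow> bool" where
  "partial_nsd_coloring V E K W c \<longleftrightarrow> W \<subseteq> V \<and>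
     (\<forall>u v. E u v \<longrightarrow> u \<in> W \<longrightarrow> v \<in> W \<longrightarrow> c {u, v} = 0) \<and>
     (\<forall>u v. E u v \<longrightarrow> (u \<notin> W \<or> v \<notin> W) \<longrightarrow> c {u, v} \<in> {1..K}) \<and>
     partial_qm V E c \<and>
     (\<forall>u v. E u v \<longrightarrow> u \<notin> W \<longrightarrow> v \<notin> W \<longrightarrow> sigma V E c u \<noteq> sigma V E c v) \<and>
     nice_induced E W"

lemma partial_nsd_coloringD:
  assumes "partial_nsd_coloring V E K W c"
  shows "W \<subseteq> V" "\<And>u v. E u v \<Longrightarrow> u \<in> W \<Longrightarrow> v \<in> W \<Longrightarrow> c {u, v} = 0"
    "\<And>u v. E u v \<Longrightarrow> u \<notin> W \<or> v \<notin> W \<Longrightarrow> c {u, v} \<in> {1..K}"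
    "partial_qm V E c"
    "\<And>u v. E u v \<Longrightarrow> u \<notin> W \<Longrightarrow> v \<notin> W \<Longrightarrow> sigma V E c u \<noteq> sigma V E c v"
    "nice_induced E W"
  using assms unfolding partial_nsd_coloring_def by blast+

lemma partial_nsd_coloring_init:
  assumes sg: "simple_graph V E" and "nice V E"
  shows "partial_nsd_coloring V E K {v \<in> V. \<exists>u. E v u} (\<lambda>_. 0)"
proof -
  let ?W = "{v \<in> V. \<exists>u. E v u}"
  have inW: "\<And>u v. E u v \<Longrightarrow> u \<in> ?W \<and> v \<in> ?W"
    using simple_graph_vertices[OF sg] simple_graph_sym[OF sg] by blast
  have "\<And>x. nbrs_in E ?W x = nbrs V E x" unfolding nbrs_in_def nbrs_def using inW by auto
  then have "nice_induced E ?W"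
    using assms(2) inW unfolding nice_induced_def nice_def deg_def by simp blast
  moreover have "partial_qm V E (\<lambda>_. 0)" unfolding partial_qm_def color_count_def by simp
  ultimately show ?thesis unfolding partial_nsd_coloring_def using inW by auto
qed

lemma qm_nsd_colorable_if_partial_nsd_coloring:
  assumes sg: "simple_graph V E" and c: "partial_nsd_coloring V E K {} c"
  shows "qm_nsd_colorable V E K"
proof -
  have col: "\<And>u v. E u v \<Longrightarrow> c {u, v} \<in> {1..K}" using c unfolding partial_nsd_coloring_def by blast
  have "edge_coloring V E K c" unfolding edge_coloring_def edges_def using col by blast
  moreover have "quasi_majority V E c" unfolding quasi_majority_def qm_cap_eq_ceiling
  proof (intro ballI allI)
    fix v i assume v: "v \<in> V"
    show "card {u \<in> nbrs V E v. c {v, u} = i} \<le> qm_cap V E v"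
    proof (cases "i = 0")
      case True
      then have "{u \<in> nbrs V E v. c {v, u} = i} = {}" using col mem_nbrs_iff[OF sg] by fastforce
      then show ?thesis by (simp only: card.empty le0)
    next
      case False
      then show ?thesis using c v unfolding partial_nsd_coloring_def partial_qm_def color_count_def by blast
    qed
  qed
  moreover have "nsd V E c" unfolding nsd_def using c unfolding partial_nsd_coloring_def by blast
  ultimately show ?thesis unfolding qm_nsd_colorable_def by blast
qed

lemma sigma_eq_if_recolored_inside:
  assumes "t \<notin> W" and "\<And>e. c' e \<noteq> c e \<Longrightarrow> e \<subseteq> W"
  shows "sigma V E c' t = sigma V E c t"
  using assms by (intro sigma_cong) blast

lemma partial_nsd_coloring_shrink:
  assumes sg: "simple_graph V E" and c: "partial_nsd_coloring V E K W c"
    and W': "W' \<subseteq> W" "nice_induced E W'"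
    and changed: "\<And>e. c' e \<noteq> c e \<Longrightarrow> e \<subseteq> W \<and> \<not> e \<subseteq> W'"
    and colored: "\<And>u v. E u v \<Longrightarrow> u \<in> W \<Longrightarrow> v \<in> W \<Longrightarrow> u \<notin> W' \<or> v \<notin> W' \<Longrightarrow> c' {u, v} \<in> {1..K}"
    and qm: "partial_qm V E c'"
    and sums: "\<And>u v. E u v \<Longrightarrow> u \<in> W - W' \<Longrightarrow> v \<notin> W' \<Longrightarrow> sigma V E c' u \<noteq> sigma V E c' v"
  shows "partial_nsd_coloring V E K W' c'"
  unfolding partial_nsd_coloring_def
proof (intro conjI allI impI)
  show "W' \<subseteq> V" using W'(1) partial_nsd_coloringD(1)[OF c] by blast
next
  fix u v assume "E u v" "u \<in> W'" "v \<in> W'"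
  moreover have "c' {u, v} = c {u, v}" using changed[of "{u, v}"] \<open>u \<in> W'\<close> \<open>v \<in> W'\<close> by blast
  ultimately show "c' {u, v} = 0" using partial_nsd_coloringD(2)[OF c] W'(1) by auto
next
  fix u v assume e: "E u v" and "u \<notin> W' \<or> v \<notin> W'"
  show "c' {u, v} \<in> {1..K}"
  proof (cases "u \<in> W \<and> v \<in> W")
    case True
    then show ?thesis using colored[OF e] \<open>u \<notin> W' \<or> v \<notin> W'\<close> by blast
  next
    case False
    then have "c' {u, v} = c {u, v}" using changed[of "{u, v}"] by blast
    then show ?thesis using partial_nsd_coloringD(3)[OF c e] False by simp
  qed
next
  fix u v assume e: "E u v" and u: "u \<notin> W'" and v: "v \<notin> W'"
  consider "u \<in> W" | "v \<in> W" | "u \<notin> W" "v \<notin> W" by blast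
  then show "sigma V E c' u \<noteq> sigma V E c' v"
  proof cases
    case 1
    then show ?thesis using sums e u v by blast
  next
    case 2
    then show ?thesis using sums[OF simple_graph_sym[OF sg e]] u v by fastforce
  next
    case 3
    have "sigma V E c' u = sigma V E c u" "sigma V E c' v = sigma V E c v"
      using 3 changed by (auto intro: sigma_eq_if_recolored_inside)
    then show ?thesis using partial_nsd_coloringD(5)[OF c e 3] by simp
  qed
qed (use qm W' in auto)

lemma card_shifted_preimage_le:
  fixes F :: "nat set"
  assumes "finite F"
  shows "finite {x. s + x \<in> F}" "card {x. s + x \<in> F} \<le> card F"
proof -
  have "{x. s + x \<in> F} \<subseteq> (\<lambda>y. y - s) ` F" by (auto intro!: image_eqI)
  then show "finite {x. s + x \<in> F}" using assms finite_subset by blast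
  have "(\<lambda>x. s + x) ` {x. s + x \<in> F} \<subseteq> F" "inj_on (\<lambda>x. s + x) {x. s + x \<in> F}"
    by (auto simp: inj_on_def)
  then show "card {x. s + x \<in> F} \<le> card F" using assms by (metis card_image card_mono)
qed

lemma card_sigma_outside_le:
  assumes sg: "simple_graph V E" and I: "I \<subseteq> nbrs V E v" "I \<subseteq> W"
  shows "card (sigma V E c ` (nbrs V E v - W)) + card I \<le> deg V E v"
proof -
  have fin: "finite (nbrs V E v)" using finite_nbrs[OF sg] .
  have "card (sigma V E c ` (nbrs V E v - W)) \<le> card (nbrs V E v - W)"
    using fin by (simp add: card_image_le)
  also have "\<dots> \<le> card (nbrs V E v - I)" using fin I by (intro card_mono) auto
  also have "\<dots> = deg V E v - card I"
    unfolding deg_def using fin I by (simp add: card_Diff_subset finite_subset)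
  finally show ?thesis using card_le_deg[OF sg I(1)] by linarith
qed

lemma color_star_edges:
  assumes sg: "simple_graph V E" and K: "3 \<le> K" and fin: "finite Q"
    and Q: "\<forall>q\<in>Q. E w q \<and> c {w, q} = 0" and qm: "partial_qm V E c"
  shows "\<exists>c'. partial_qm V E c' \<and> (\<forall>q\<in>Q. c' {w, q} \<in> {1..K}) \<and>
    (\<forall>e. c' e \<noteq> c e \<longrightarrow> (\<exists>q\<in>Q. e = {w, q}))"
  using fin Q
proof (induction Q rule: finite_induct)
  case empty
  then show ?case using qm by blast
next
  case (insert q Q)
  then obtain c1 where c1: "partial_qm V E c1" "\<forall>q\<in>Q. c1 {w, q} \<in> {1..K}"
    "\<forall>e. c1 e \<noteq> c e \<longrightarrow> (\<exists>q\<in>Q. e = {w, q})" by auto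
  have "c1 {w, q} = c {w, q}" using c1(3) insert(2) by (auto simp: doubleton_eq_iff)
  then have "c1 {w, q} = 0" using insert(4) by simp
  moreover have "E w q" using insert(4) by simp
  ultimately obtain x where x: "x \<in> {1..K}" "partial_qm V E (c1({w, q} := x))"
    using exists_color_fun_upd[OF sg _ _ c1(1) finite.emptyI] K by (metis card.empty add_0)
  show ?case
  proof (intro exI conjI)
    show "\<forall>q'\<in>insert q Q. (c1({w, q} := x)) {w, q'} \<in> {1..K}"
      using x(1) c1(2) by (auto simp: doubleton_eq_iff)
    show "\<forall>e. (c1({w, q} := x)) e \<noteq> c e \<longrightarrow> (\<exists>q'\<in>insert q Q. e = {w, q'})"
      using c1(3) by auto
  qed (rule x(2))
qed

text \<open>The edges from w into W other than one edge wp are coloured freely; the colour of wp then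
  makes the sum at w differ from the final sums of the at most \<Delta> - 1 processed neighbours of w.\<close>
lemma partial_nsd_coloring_Diff_vertex:
  assumes sg: "simple_graph V E" and K: "max_deg V E + 2 \<le> K"
    and c: "partial_nsd_coloring V E K W c" and w: "w \<in> W" and W': "nice_induced E (W - {w})"
  obtains c' where "partial_nsd_coloring V E K (W - {w}) c'"
proof -
  have wV: "w \<in> V" using w partial_nsd_coloringD(1)[OF c] by blast
  obtain p where p: "p \<in> W" "E w p"
    using partial_nsd_coloringD(6)[OF c] w unfolding nice_induced_def by blast
  have pw: "p \<in> nbrs V E w" using p(2) mem_nbrs_iff[OF sg] by simp
  define Q where "Q = nbrs_in E W w - {p}"
  have Q: "\<forall>q\<in>Q. E w q \<and> c {w, q} = 0" "\<forall>q\<in>Q. q \<in> W \<and> q \<noteq> p"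
    unfolding Q_def nbrs_in_def using partial_nsd_coloringD(2)[OF c _ w] by auto
  have "finite W" using partial_nsd_coloringD(1)[OF c] simple_graph_finite[OF sg] by (rule finite_subset)
  then have "finite Q" unfolding Q_def by (simp add: finite_nbrs_in)
  moreover have "3 \<le> K" using K deg_le_max_deg[OF sg wV] card_le_deg[OF sg, of "{p}" w] pw by simp
  ultimately obtain c1 where c1: "partial_qm V E c1" "\<forall>q\<in>Q. c1 {w, q} \<in> {1..K}"
    "\<forall>e. c1 e \<noteq> c e \<longrightarrow> (\<exists>q\<in>Q. e = {w, q})"
    using color_star_edges[OF sg _ _ Q(1) partial_nsd_coloringD(4)[OF c]] by blast
  have "\<not> (\<exists>q\<in>Q. {w, p} = {w, q})" using Q(2) by (auto simp: doubleton_eq_iff)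
  then have "c1 {w, p} = c {w, p}" using c1(3) by blast
  then have p0: "c1 {w, p} = 0" using partial_nsd_coloringD(2)[OF c p(2) w p(1)] by simp
  define F where "F = sigma V E c1 ` (nbrs V E w - W)"
  define X where "X = {x. sigma V E c1 w + x \<in> F}"
  have "finite F" unfolding F_def using finite_nbrs[OF sg] by simp
  then have "finite X" "card X \<le> card F" unfolding X_def by (rule card_shifted_preimage_le)+
  moreover have "card F + 1 \<le> deg V E w"
    unfolding F_def using card_sigma_outside_le[OF sg, of "{p}"] pw p(1) by simp
  ultimately have "card X + 3 \<le> K" using K deg_le_max_deg[OF sg wV] by linarith
  then obtain x where x: "x \<in> {1..K}" "x \<notin> X" "partial_qm V E (c1({w, p} := x))"
    using exists_color_fun_upd[OF sg p(2) p0 c1(1) \<open>finite X\<close>] by blast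
  let ?c2 = "c1({w, p} := x)"
  have "partial_nsd_coloring V E K (W - {w}) ?c2"
  proof (rule partial_nsd_coloring_shrink[OF sg c _ W'])
    fix e assume "?c2 e \<noteq> c e"
    then have "e = {w, p} \<or> (\<exists>q\<in>Q. e = {w, q})" using c1(3) by (cases "e = {w, p}") auto
    then show "e \<subseteq> W \<and> \<not> e \<subseteq> W - {w}" using w p Q(2) by auto
  next
    have from_w: "?c2 {w, y} \<in> {1..K}" if "E w y" "y \<in> W" for y
    proof (cases "y = p")
      case False
      then have "y \<in> Q" "{w, y} \<noteq> {w, p}" unfolding Q_def nbrs_in_def using that by (auto simp: doubleton_eq_iff)
      then show ?thesis using c1(2) by simp
    qed (use x(1) in simp)
    show "?c2 {u, v} \<in> {1..K}" if "E u v" "u \<in> W" "v \<in> W" "u \<notin> W - {w} \<or> v \<notin> W - {w}" for u v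
    proof (cases "u = w")
      case False
      then have "v = w" using that by blast
      then show ?thesis using from_w[of u] that simple_graph_sym[OF sg] by (simp add: insert_commute)
    qed (use that from_w in blast)
  next
    fix u v assume e: "E u v" "u \<in> W - (W - {w})" "v \<notin> W - {w}"
    then have u: "u = w" and v: "v \<notin> W" using simple_graph_irrefl[OF sg] by auto
    then have "sigma V E c1 v \<in> F" unfolding F_def using e(1) mem_nbrs_iff[OF sg] by simp
    then have "sigma V E c1 w + x \<noteq> sigma V E c1 v" using x(2) unfolding X_def by auto
    moreover have "v \<noteq> w" "v \<noteq> p" using u v w p(1) by auto
    ultimately show "sigma V E ?c2 u \<noteq> sigma V E ?c2 v"
      using u sigma_fun_upd[of V E w p c1 x, OF sg p(2) p0] by simp
  qed (use x(3) in auto)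
  then show ?thesis using that by blast
qed

section \<open>Finishing a three-vertex component\<close>

text \<open>Here cnt i counts the edges of colour i at the centre r of a three-vertex component, d is the
  degree of r, and the uncoloured edges ra, rb account for the 2 in the hypothesis on sums; Z1 and
  Z2 are the colours excluded for ra and rb.\<close>
lemma centre_color_restrictions:
  fixes cnt :: "nat \<Rightarrow> nat" and cap d :: nat
  assumes d: "2 \<le> d" "d \<le> 2 * cap" and qm: "\<And>i. i \<noteq> 0 \<Longrightarrow> cnt i \<le> cap"
    and sums: "\<And>S. finite S \<Longrightarrow> 0 \<notin> S \<Longrightarrow> sum cnt S + 2 \<le> d"
  obtains Z1 Z2 :: "nat set" and dist :: bool
  where "finite Z1" "finite Z2" "card Z1 + card Z2 + 2 * of_bool dist \<le> 2"
    "card Z1 + 2 \<le> d" "card Z2 + 2 \<le> d"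
    "\<And>x1 x2 i. x1 \<notin> Z1 \<Longrightarrow> x2 \<notin> Z2 \<Longrightarrow> (dist \<longrightarrow> x1 \<noteq> x2) \<Longrightarrow> i \<noteq> 0 \<Longrightarrow>
       cnt i + of_bool (i = x1) + of_bool (i = x2) \<le> cap"
proof (cases "d = 2")
  case True
  \<comment> \<open>the two new edges are the only edges at r\<close>
  have "cnt i = 0" if "i \<noteq> 0" for i using sums[of "{i}"] that True by simp
  then show ?thesis using that[of "{}" "{}" True] d True by fastforce
next
  case False
  then have cap2: "2 \<le> cap" using d by linarith
  show ?thesis
  proof (cases "\<exists>s. s \<noteq> 0 \<and> cap \<le> cnt s")
    case True
    then obtain s where s: "s \<noteq> 0" "cap \<le> cnt s" by blast
    have other: "cnt i + 2 \<le> cap" if "i \<noteq> 0" "i \<noteq> s" for i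
      using sums[of "{i, s}"] that s d by simp
    show ?thesis
    proof (rule that[of "{s}" "{s}" False])
      fix x1 x2 i :: nat assume "x1 \<notin> {s}" "x2 \<notin> {s}" "i \<noteq> 0"
      then show "cnt i + of_bool (i = x1) + of_bool (i = x2) \<le> cap"
        using qm[of i] other[of i] by (cases "i = s") auto
    qed (use False d in auto)
  next
    case unsaturated: False
    \<comment> \<open>at most two colours are one short of saturation\<close>
    define H where "H = {i. i \<noteq> 0 \<and> cap \<le> cnt i + 1}"
    have bound: "card S \<le> 2 \<and> card S + 2 \<le> d" if "finite S" "S \<subseteq> H" for S
    proof -
      have low: "card S * (cap - 1) \<le> sum cnt S"
        using that by (induction S rule: finite_induct) (auto simp: H_def)
      have high: "sum cnt S + 2 \<le> d" using sums[OF that(1)] that(2) unfolding H_def by force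
      have "1 \<le> cap - 1" using cap2 by linarith
      have "card S * (cap - 1) \<le> 2 * (cap - 1)" using low high d by linarith
      then have "card S \<le> 2" using \<open>1 \<le> cap - 1\<close> by simp
      moreover have "card S \<le> card S * (cap - 1)"
        using \<open>1 \<le> cap - 1\<close> by (metis mult.right_neutral mult_le_mono2)
      ultimately show ?thesis using low high by linarith
    qed
    have "finite H"
    proof (rule ccontr)
      assume "infinite H"
      then obtain S where "finite S" "card S = 3" "S \<subseteq> H" using infinite_arbitrarily_large by blast
      then show False using bound by fastforce
    qed
    then have cH: "card H \<le> 2" "card H + 2 \<le> d" using bound[of H] by auto
    have "cnt i + of_bool (i = x1) + of_bool (i = x2) \<le> cap"
      if "x1 \<notin> H" "i \<noteq> 0" for x1 x2 i
    proof -
      have "cnt i < cap" using that(2) unsaturated by (meson not_le)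
      moreover have "cnt x1 + 1 < cap" if "i = x1" using \<open>x1 \<notin> H\<close> \<open>i \<noteq> 0\<close> that unfolding H_def by simp
      ultimately show ?thesis by auto
    qed
    then show ?thesis using that[of H "{}" False] \<open>finite H\<close> cH by fastforce
  qed
qed

lemma card_colors_avoiding_ge:
  assumes "finite F" "finite Z"
  shows "K \<le> card ({1..K} - ({x. s + x \<in> F} \<union> Z)) + card F + card Z"
proof -
  have "finite ({x. s + x \<in> F} \<union> Z)" "card ({x. s + x \<in> F} \<union> Z) \<le> card F + card Z"
    using card_shifted_preimage_le[OF assms(1), of s] card_Un_le[of "{x. s + x \<in> F}" Z] assms(2) by auto
  moreover have "card {1..K} - card ({x. s + x \<in> F} \<union> Z) \<le> card ({1..K} - ({x. s + x \<in> F} \<union> Z))"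
    by (rule diff_card_le_card_Diff) fact
  ultimately show ?thesis by simp
qed

text \<open>Read x1, x2 as the colours of two uncoloured edges ra, rb, and s, sa, sb as the current sums
  at r, a, b.\<close>
lemma exists_color_pair:
  fixes Fa Fb F Za Zb :: "nat set" and R :: "nat \<Rightarrow> nat \<Rightarrow> bool"
  assumes fin: "finite Fa" "finite Fb" "finite F" "finite Za" "finite Zb"
    and Ra: "\<And>x1. card {x2 \<in> {1..K}. \<not> R x1 x2} \<le> k"
    and Rb: "\<And>x2. card {x1 \<in> {1..K}. \<not> R x1 x2} \<le> k"
    and a: "card Fa + card Za < K" and b: "card Fb + card Zb < K"
    and total: "card F + 2 * k + 2 + card Fa + card Za + card Fb + card Zb \<le> 2 * K"
  obtains x1 x2 where "x1 \<in> {1..K}" "x2 \<in> {1..K}" "x1 \<notin> Za" "x2 \<notin> Zb"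
    "sa + x1 \<notin> Fa" "sb + x2 \<notin> Fb" "s + x1 + x2 \<notin> F" "R x1 x2"
proof -
  define A where "A = {1..K} - ({x. sa + x \<in> Fa} \<union> Za)"
  define B where "B = {1..K} - ({x. sb + x \<in> Fb} \<union> Zb)"
  define G where "G = {t. s + t \<in> F}"
  have cA: "K \<le> card A + card Fa + card Za" and cB: "K \<le> card B + card Fb + card Zb"
    unfolding A_def B_def using card_colors_avoiding_ge fin by auto
  have "A \<subseteq> {1..K}" "B \<subseteq> {1..K}" unfolding A_def B_def by auto
  then have exclA: "card {x1 \<in> A. \<not> R x1 x2} \<le> k" and exclB: "card {x2 \<in> B. \<not> R x1 x2} \<le> k" for x1 x2
    using Ra[of x1] Rb[of x2] card_mono[of "{x1 \<in> {1..K}. \<not> R x1 x2}" "{x1 \<in> A. \<not> R x1 x2}"]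
      card_mono[of "{x2 \<in> {1..K}. \<not> R x1 x2}" "{x2 \<in> B. \<not> R x1 x2}"] by force+
  have G: "finite G" "card G \<le> card F" unfolding G_def by (rule card_shifted_preimage_le[OF fin(3)])+
  have "0 < card A" "0 < card B" using cA cB a b by linarith+
  then have AB: "finite A" "finite B" "A \<noteq> {}" "B \<noteq> {}" by (auto simp: card_gt_0_iff)
  have "card G + 2 * k + 2 \<le> card A + card B" using total cA cB G(2) by linarith
  then obtain x1 x2 where "x1 \<in> A" "x2 \<in> B" "R x1 x2" "x1 + x2 \<notin> G"
    using exists_sum_notin[OF AB(1,2) G(1) AB(3,4) exclB exclA] by blast
  then show ?thesis using that unfolding A_def B_def G_def by (auto simp: add.assoc)
qed

lemma card_conflicting_colors_le:
  fixes s t x :: nat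
  shows "card {y \<in> A. \<not> ((P \<longrightarrow> x \<noteq> y) \<and> (Q \<longrightarrow> s + x \<noteq> t + y))} \<le> of_bool P + of_bool Q"
    and "card {y \<in> A. \<not> ((P \<longrightarrow> y \<noteq> x) \<and> (Q \<longrightarrow> t + y \<noteq> s + x))} \<le> of_bool P + of_bool Q"
proof -
  let ?C = "(if P then {x} else {}) \<union> (if Q then {s + x - t} else {})"
  have fin: "finite ?C" by simp
  have C: "card ?C \<le> of_bool P + of_bool Q" by (cases P; cases Q) (simp_all add: card_insert_if)
  have "{y \<in> A. \<not> ((P \<longrightarrow> x \<noteq> y) \<and> (Q \<longrightarrow> s + x \<noteq> t + y))} \<subseteq> ?C" by auto
  from card_mono[OF fin this] C
  show "card {y \<in> A. \<not> ((P \<longrightarrow> x \<noteq> y) \<and> (Q \<longrightarrow> s + x \<noteq> t + y))} \<le> of_bool P + of_bool Q"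
    by (rule le_trans)
  have "{y \<in> A. \<not> ((P \<longrightarrow> y \<noteq> x) \<and> (Q \<longrightarrow> t + y \<noteq> s + x))} \<subseteq> ?C" by auto
  from card_mono[OF fin this] C
  show "card {y \<in> A. \<not> ((P \<longrightarrow> y \<noteq> x) \<and> (Q \<longrightarrow> t + y \<noteq> s + x))} \<le> of_bool P + of_bool Q"
    by (rule le_trans)
qed

lemma partial_qm_fun_upd_path:
  assumes sg: "simple_graph V E" and e: "E a r" "E b r" "a \<noteq> b"
    and qm: "partial_qm V E c" and z: "c {a, r} = 0" "c {b, r} = 0" and x: "x1 \<noteq> 0" "x2 \<noteq> 0"
    and ends: "color_count V E c a x1 < qm_cap V E a" "color_count V E c b x2 < qm_cap V E b"
    and centre: "color_count V E c r x1 + 1 + of_bool (x1 = x2) \<le> qm_cap V E r"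
      "color_count V E c r x2 + 1 + of_bool (x1 = x2) \<le> qm_cap V E r"
  shows "partial_qm V E (c({a, r} := x1, {b, r} := x2))"
proof -
  have ra: "r \<noteq> a" "r \<noteq> b" using e simple_graph_irrefl[OF sg] by auto
  have "partial_qm V E (c({a, r} := x1))"
    using ends(1) centre(1) by (intro partial_qm_fun_upd[OF sg e(1) z(1) qm x(1)]) auto
  moreover have "(c({a, r} := x1)) {b, r} = 0" using z(2) e(3) by (auto simp: doubleton_eq_iff)
  moreover have "color_count V E (c({a, r} := x1)) b x2 < qm_cap V E b"
    using color_count_fun_upd[of V E a r c x2 x1 b, OF sg e(1) z(1) x(2)] ends(2) e(3) ra by simp
  moreover have "color_count V E (c({a, r} := x1)) r x2 < qm_cap V E r"
    using color_count_fun_upd[of V E a r c x2 x1 r, OF sg e(1) z(1) x(2)] centre(2) by auto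
  ultimately show ?thesis by (intro partial_qm_fun_upd[OF sg e(2) _ _ x(2)])
qed

lemma card_sigma_outside_three_vertex_component:
  assumes sg: "simple_graph V E" and T: "three_vertex_component E W a r b"
  shows "card (sigma V E c ` (nbrs V E a - W)) + 1 + of_bool (E a b) \<le> deg V E a"
    "card (sigma V E c ` (nbrs V E b - W)) + 1 + of_bool (E a b) \<le> deg V E b"
    "card (sigma V E c ` (nbrs V E r - W)) + 2 \<le> deg V E r"
proof -
  note T' = three_vertex_componentD[OF T]
  have nb: "\<And>x y. y \<in> nbrs V E x \<longleftrightarrow> E x y" using mem_nbrs_iff[OF sg] .
  have sym: "\<And>u v. E u v \<Longrightarrow> E v u" using simple_graph_sym[OF sg] .
  have ra: "r \<noteq> a" "r \<noteq> b" using T'(5,6) simple_graph_irrefl[OF sg] by auto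
  have "card (sigma V E c ` (nbrs V E a - W)) + card (if E a b then {r, b} else {r}) \<le> deg V E a"
    using T' nb sym by (intro card_sigma_outside_le[OF sg]) auto
  then show "card (sigma V E c ` (nbrs V E a - W)) + 1 + of_bool (E a b) \<le> deg V E a"
    using ra by (auto split: if_splits)
  have "card (sigma V E c ` (nbrs V E b - W)) + card (if E a b then {r, a} else {r}) \<le> deg V E b"
    using T' nb sym by (intro card_sigma_outside_le[OF sg]) auto
  then show "card (sigma V E c ` (nbrs V E b - W)) + 1 + of_bool (E a b) \<le> deg V E b"
    using ra by (auto split: if_splits)
  have "card (sigma V E c ` (nbrs V E r - W)) + card {a, b} \<le> deg V E r"
    using T' nb by (intro card_sigma_outside_le[OF sg]) auto
  then show "card (sigma V E c ` (nbrs V E r - W)) + 2 \<le> deg V E r" using T'(4) by simp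
qed

lemma exists_colors_three_vertex_component:
  assumes sg: "simple_graph V E" and KD: "3 * max_deg V E + 4 \<le> 2 * K" and WV: "W \<subseteq> V"
    and T: "three_vertex_component E W a r b"
    and qm: "partial_qm V E c" and z: "c {a, r} = 0" "c {b, r} = 0"
  obtains x1 x2 where "x1 \<in> {1..K}" "x2 \<in> {1..K}"
    "partial_qm V E (c({a, r} := x1, {b, r} := x2))"
    "sigma V E c a + x1 \<notin> sigma V E c ` (nbrs V E a - W)"
    "sigma V E c b + x2 \<notin> sigma V E c ` (nbrs V E b - W)"
    "sigma V E c r + x1 + x2 \<notin> sigma V E c ` (nbrs V E r - W)"
    "x2 + sigma V E c r \<noteq> sigma V E c a" "x1 + sigma V E c r \<noteq> sigma V E c b"
    "E a b \<Longrightarrow> sigma V E c a + x1 \<noteq> sigma V E c b + x2"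
proof -
  note T' = three_vertex_componentD[OF T]
  have sym: "\<And>u v. E u v \<Longrightarrow> E v u" using simple_graph_sym[OF sg] .
  have nb: "\<And>x y. y \<in> nbrs V E x \<longleftrightarrow> E x y" using mem_nbrs_iff[OF sg] .
  define D where "D = max_deg V E"
  have degD: "deg V E v \<le> D" if "v \<in> W" for v unfolding D_def using deg_le_max_deg[OF sg] that WV by blast
  define Sa where "Sa = sigma V E c a"
  define Sb where "Sb = sigma V E c b"
  define Sr where "Sr = sigma V E c r"
  define Fa where "Fa = sigma V E c ` (nbrs V E a - W)"
  define Fb where "Fb = sigma V E c ` (nbrs V E b - W)"
  define Fr where "Fr = sigma V E c ` (nbrs V E r - W)"
  have fin: "finite Fa" "finite Fb" "finite Fr" unfolding Fa_def Fb_def Fr_def using finite_nbrs[OF sg] by auto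
  note bounds = card_sigma_outside_three_vertex_component[OF sg T, of c, folded Fa_def Fb_def Fr_def]
  have cFa: "card Fa + 1 + of_bool (E a b) \<le> D" using bounds(1) degD[OF T'(1)] by linarith
  have cFb: "card Fb + 1 + of_bool (E a b) \<le> D" using bounds(2) degD[OF T'(3)] by linarith
  have cFr: "card Fr + 2 \<le> deg V E r" by (rule bounds(3))
  have ab_r: "{a, b} \<subseteq> nbrs V E r" using T' nb by auto
  have "sum (color_count V E c r) S + card {a, b} \<le> deg V E r" if "finite S" "0 \<notin> S" for S
    using that ab_r z by (intro sum_color_count_le_deg[OF sg]) (auto simp: insert_commute)
  then have r_sums: "\<And>S. finite S \<Longrightarrow> 0 \<notin> S \<Longrightarrow> sum (color_count V E c r) S + 2 \<le> deg V E r"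
    using T'(4) by simp
  have r_qm: "\<And>i. i \<noteq> 0 \<Longrightarrow> color_count V E c r i \<le> qm_cap V E r"
    using qm T'(2) WV unfolding partial_qm_def by blast
  have r2: "2 \<le> deg V E r" using cFr by linarith
  obtain Z1 Z2 dist where Z: "finite Z1" "finite Z2" "card Z1 + card Z2 + 2 * of_bool dist \<le> 2"
      "card Z1 + 2 \<le> deg V E r" "card Z2 + 2 \<le> deg V E r"
    and centre: "\<And>x1 x2 i. x1 \<notin> Z1 \<Longrightarrow> x2 \<notin> Z2 \<Longrightarrow> (dist \<longrightarrow> x1 \<noteq> x2) \<Longrightarrow> i \<noteq> 0 \<Longrightarrow>
      color_count V E c r i + of_bool (i = x1) + of_bool (i = x2) \<le> qm_cap V E r"
    using centre_color_restrictions[OF r2 deg_le_twice_qm_cap r_qm r_sums] by blast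
  obtain s1 where s1: "\<And>i. i \<noteq> 0 \<Longrightarrow> qm_cap V E a \<le> color_count V E c a i \<Longrightarrow> i = s1"
    using unique_saturated_color[OF sg, of r a c] T' z nb sym by blast
  obtain s2 where s2: "\<And>i. i \<noteq> 0 \<Longrightarrow> qm_cap V E b \<le> color_count V E c b i \<Longrightarrow> i = s2"
    using unique_saturated_color[OF sg, of r b c] T' z nb sym by blast
  \<comment> \<open>Sb - Sr and Sa - Sr are the colours that would give r the same sum as b or a\<close>
  define Za where "Za = insert s1 (insert (Sb - Sr) Z1)"
  define Zb where "Zb = insert s2 (insert (Sa - Sr) Z2)"
  have Zab: "finite Za" "finite Zb" "card Za \<le> card Z1 + 2" "card Zb \<le> card Z2 + 2"
    unfolding Za_def Zb_def using Z(1,2) by (simp_all add: card_insert_if)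
  define R where "R x1 x2 \<longleftrightarrow> (dist \<longrightarrow> x1 \<noteq> x2) \<and> (E a b \<longrightarrow> Sa + x1 \<noteq> Sb + x2)" for x1 x2
  have "card {x2 \<in> {1..K}. \<not> R x1 x2} \<le> of_bool dist + of_bool (E a b)"
    "card {x1 \<in> {1..K}. \<not> R x1 x2} \<le> of_bool dist + of_bool (E a b)" for x1 x2
    unfolding R_def by (rule card_conflicting_colors_le)+
  moreover have "deg V E r \<le> D" by (rule degD[OF T'(2)])
  then have "card Fa + card Za < K" "card Fb + card Zb < K"
    using KD[folded D_def] cFa cFb Z Zab by linarith+
  moreover have "card Fr + 2 * (of_bool dist + of_bool (E a b)) + 2 + card Fa + card Za + card Fb + card Zb \<le> 2 * K"
    using \<open>deg V E r \<le> D\<close> KD[folded D_def] cFa cFb cFr Z Zab by simp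
  ultimately obtain x1 x2 where x: "x1 \<in> {1..K}" "x2 \<in> {1..K}" "x1 \<notin> Za" "x2 \<notin> Zb"
    "Sa + x1 \<notin> Fa" "Sb + x2 \<notin> Fb" "Sr + x1 + x2 \<notin> Fr" "R x1 x2"
    using exists_color_pair[OF fin(1,2,3) Zab(1,2)] by blast
  have x0: "x1 \<noteq> 0" "x2 \<noteq> 0" using x(1,2) by auto
  have "partial_qm V E (c({a, r} := x1, {b, r} := x2))"
  proof (rule partial_qm_fun_upd_path[OF sg _ _ T'(4) qm z x0])
    show "color_count V E c a x1 < qm_cap V E a" "color_count V E c b x2 < qm_cap V E b"
      using s1[OF x0(1)] s2[OF x0(2)] x(3,4) unfolding Za_def Zb_def by force+
    show "color_count V E c r x1 + 1 + of_bool (x1 = x2) \<le> qm_cap V E r"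
      "color_count V E c r x2 + 1 + of_bool (x1 = x2) \<le> qm_cap V E r"
      using centre[of x1 x2 x1] centre[of x1 x2 x2] x(3,4,8) x0 unfolding Za_def Zb_def R_def by auto
  qed (use T'(5,6) sym in auto)
  moreover have "x2 + Sr \<noteq> Sa" "x1 + Sr \<noteq> Sb" using x(3,4) unfolding Za_def Zb_def by auto
  ultimately show ?thesis
    using that x(1,2,5,6,7,8) unfolding Sa_def Sb_def Sr_def Fa_def Fb_def Fr_def R_def by blast
qed

lemma exists_color_if_edge:
  assumes sg: "simple_graph V E" and z: "E a b \<Longrightarrow> c {a, b} = 0" and qm: "partial_qm V E c"
    and K: "3 \<le> K"
  obtains c' where "partial_qm V E c'" "\<And>e. c' e \<noteq> c e \<Longrightarrow> e = {a, b}"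
    "E a b \<Longrightarrow> c' {a, b} \<in> {1..K}"
proof (cases "E a b")
  case True
  obtain x where x: "x \<in> {1..K}" "partial_qm V E (c({a, b} := x))"
    using exists_color_fun_upd[OF sg True z[OF True] qm finite.emptyI] K by (metis card.empty add_0)
  show ?thesis
  proof (rule that[of "c({a, b} := x)"])
    show "\<And>e. (c({a, b} := x)) e \<noteq> c e \<Longrightarrow> e = {a, b}" by (metis fun_upd_other)
  qed (use x in simp_all)
qed (use qm in blast)

lemma partial_nsd_coloring_Diff_component:
  assumes sg: "simple_graph V E" and KD: "3 * max_deg V E + 4 \<le> 2 * K"
    and c: "partial_nsd_coloring V E K W c" and T: "three_vertex_component E W a r b"
  obtains c' where "partial_nsd_coloring V E K (W - {a, r, b}) c'"
proof -
  note T' = three_vertex_componentD[OF T]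
  have sym: "\<And>u v. E u v \<Longrightarrow> E v u" using simple_graph_sym[OF sg] .
  have ra: "r \<noteq> a" "r \<noteq> b" using T'(5,6) simple_graph_irrefl[OF sg] by auto
  have WV: "W \<subseteq> V" by (rule partial_nsd_coloringD(1)[OF c])
  have zero: "\<And>u v. E u v \<Longrightarrow> u \<in> W \<Longrightarrow> v \<in> W \<Longrightarrow> c {u, v} = 0" by (rule partial_nsd_coloringD(2)[OF c])
  have "card {a, b} \<le> deg V E r" using T' mem_nbrs_iff[OF sg] by (intro card_le_deg[OF sg]) auto
  then have "2 \<le> max_deg V E" using T'(2,4) WV deg_le_max_deg[OF sg, of r] by auto
  then have K3: "3 \<le> K" using KD by simp
  obtain c0 where c0: "partial_qm V E c0" "\<And>e. c0 e \<noteq> c e \<Longrightarrow> e = {a, b}"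
    "E a b \<Longrightarrow> c0 {a, b} \<in> {1..K}"
    using exists_color_if_edge[OF sg _ partial_nsd_coloringD(4)[OF c] K3] zero T'(1,3) by blast
  have ne: "{a, r} \<noteq> {a, b}" "{b, r} \<noteq> {a, b}" "{b, r} \<noteq> {a, r}"
    using ra T'(4) by (auto simp: doubleton_eq_iff)
  have "c0 {a, r} = c {a, r}" "c0 {b, r} = c {b, r}" using c0(2) ne(1,2) by blast+
  then have z: "c0 {a, r} = 0" "c0 {b, r} = 0"
    using zero[OF sym[OF T'(5)] T'(1,2)] zero[OF sym[OF T'(6)] T'(3,2)] by simp_all
  obtain x1 x2 where x: "x1 \<in> {1..K}" "x2 \<in> {1..K}"
    "partial_qm V E (c0({a, r} := x1, {b, r} := x2))"
    "sigma V E c0 a + x1 \<notin> sigma V E c0 ` (nbrs V E a - W)"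
    "sigma V E c0 b + x2 \<notin> sigma V E c0 ` (nbrs V E b - W)"
    "sigma V E c0 r + x1 + x2 \<notin> sigma V E c0 ` (nbrs V E r - W)"
    "x2 + sigma V E c0 r \<noteq> sigma V E c0 a" "x1 + sigma V E c0 r \<noteq> sigma V E c0 b"
    "E a b \<Longrightarrow> sigma V E c0 a + x1 \<noteq> sigma V E c0 b + x2"
    using exists_colors_three_vertex_component[OF sg KD WV T c0(1) z] by blast
  let ?c1 = "c0({a, r} := x1)"
  let ?c2 = "?c1({b, r} := x2)"
  have Ear: "E a r" and Ebr: "E b r" using T'(5,6) sym by auto
  have z1: "?c1 {b, r} = 0" using z(2) ne(3) by simp
  have sig: "sigma V E ?c2 t =
      sigma V E c0 t + (if t = a \<or> t = r then x1 else 0) + (if t = b \<or> t = r then x2 else 0)" for t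
    using sigma_fun_upd[of V E b r ?c1 x2 t, OF sg Ebr z1] sigma_fun_upd[of V E a r c0 x1 t, OF sg Ear z(1)]
    by simp
  have "partial_nsd_coloring V E K (W - {a, r, b}) ?c2"
  proof (rule partial_nsd_coloring_shrink[OF sg c _
        nice_induced_Diff_component[OF sym partial_nsd_coloringD(6)[OF c] T]])
    fix e assume "?c2 e \<noteq> c e"
    then have "e = {a, b} \<or> e = {a, r} \<or> e = {b, r}"
      using c0(2) by (cases "e = {a, r}"; cases "e = {b, r}") auto
    then show "e \<subseteq> W \<and> \<not> e \<subseteq> W - {a, r, b}" using T'(1-3) by auto
  next
    fix u v assume e: "E u v" "u \<in> W" "v \<in> W" "u \<notin> W - {a, r, b} \<or> v \<notin> W - {a, r, b}"
    have "u \<in> {a, r, b} \<or> v \<in> {a, r, b}" using e(2-4) by auto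
    then have "{u, v} = {a, r} \<or> {u, v} = {b, r} \<or> ({u, v} = {a, b} \<and> E a b)"
      using three_vertex_component_edge[OF sym T e(1-3)] by simp
    moreover have "?c2 {a, r} = x1" "?c2 {b, r} = x2" "?c2 {a, b} = c0 {a, b}" using ne by simp_all
    ultimately show "?c2 {u, v} \<in> {1..K}" using x(1,2) c0(3) by (elim disjE conjE) simp_all
  next
    fix u v assume e: "E u v" "u \<in> W - (W - {a, r, b})" "v \<notin> W - {a, r, b}"
    then have u: "u \<in> {a, r, b}" by blast
    show "sigma V E ?c2 u \<noteq> sigma V E ?c2 v"
    proof (cases "v \<in> W")
      case False
      then have "v \<in> nbrs V E u - W" "v \<noteq> a" "v \<noteq> r" "v \<noteq> b"
        using e(1) mem_nbrs_iff[OF sg] T'(1-3) by auto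
      then show ?thesis using u x(4,5,6) sig[of u] sig[of v] ra T'(4) by auto
    next
      case True
      then have "v \<in> {a, r, b}" "u \<noteq> v" using e simple_graph_irrefl[OF sg] by auto
      moreover have "E a b" if "u = a \<and> v = b \<or> u = b \<and> v = a" using e(1) that sym by auto
      ultimately show ?thesis using u x(7,8,9) sig[of u] sig[of v] ra T'(4) by (auto simp: add.commute)
    qed
  qed (use x(3) in auto)
  then show ?thesis by (rule that)
qed

lemma partial_nsd_coloring_empty:
  assumes sg: "simple_graph V E" and KD: "3 * max_deg V E + 4 \<le> 2 * K"
  shows "partial_nsd_coloring V E K W c \<Longrightarrow> \<exists>c'. partial_nsd_coloring V E K {} c'"
proof (induction "card W" arbitrary: W c rule: less_induct)
  case less
  have fin: "finite W"
    using partial_nsd_coloringD(1)[OF less.prems] simple_graph_finite[OF sg] by (rule finite_subset)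
  show ?case
  proof (cases "W = {}")
    case True
    then show ?thesis using less.prems by blast
  next
    case False
    have "(\<exists>v\<in>W. nice_induced E (W - {v})) \<or> (\<exists>a r b. three_vertex_component E W a r b)"
    proof (rule nice_induced_peel)
      show "\<And>u v. E u v \<Longrightarrow> E v u" by (rule simple_graph_sym[OF sg])
      show "\<And>v. \<not> E v v" by (rule simple_graph_irrefl[OF sg])
    qed (use fin partial_nsd_coloringD(6)[OF less.prems] False in auto)
    then show ?thesis
    proof (elim disjE exE bexE)
      fix w assume w: "w \<in> W" "nice_induced E (W - {w})"
      have "max_deg V E + 2 \<le> K" using KD by linarith
      then obtain c' where "partial_nsd_coloring V E K (W - {w}) c'"
        using partial_nsd_coloring_Diff_vertex[OF sg _ less.prems w] by blast
      moreover have "card (W - {w}) < card W" using fin w(1) by (rule card_Diff1_less)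
      ultimately show ?thesis using less.hyps by blast
    next
      fix a r b assume T: "three_vertex_component E W a r b"
      obtain c' where "partial_nsd_coloring V E K (W - {a, r, b}) c'"
        using partial_nsd_coloring_Diff_component[OF sg KD less.prems T] by blast
      moreover have "card (W - {a, r, b}) < card W"
        using fin three_vertex_componentD(1)[OF T] by (intro psubset_card_mono) auto
      ultimately show ?thesis using less.hyps by blast
    qed
  qed
qed

theorem mainTheorem7:
  fixes V :: "'a set" and E :: "'a \<Rightarrow> 'a \<Rightarrow> bool"
  assumes "simple_graph V E" and "nice V E"
  shows "(\<exists>k. qm_nsd_colorable V E k) \<and>
         real (chi_qm_sigma V E) \<le> real_of_int \<lceil>(3 * real (max_deg V E) + 4) / 2\<rceil>"
proof -
  define K where "K = nat \<lceil>(3 * real (max_deg V E) + 4) / 2\<rceil>"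
  have real_K: "real K = real_of_int \<lceil>(3 * real (max_deg V E) + 4) / 2\<rceil>"
    unfolding K_def by (simp add: ceiling_le_zero not_le)
  have "(3 * real (max_deg V E) + 4) / 2 \<le> real K" unfolding real_K by (rule le_of_int_ceiling)
  then have "real (3 * max_deg V E + 4) \<le> real (2 * K)" by simp
  then have KD: "3 * max_deg V E + 4 \<le> 2 * K" by (simp only: of_nat_le_iff)
  obtain c where "partial_nsd_coloring V E K {} c"
    using partial_nsd_coloring_empty[OF assms(1) KD partial_nsd_coloring_init[OF assms]] by blast
  then have colorable: "qm_nsd_colorable V E K"
    by (rule qm_nsd_colorable_if_partial_nsd_coloring[OF assms(1)])
  then have "chi_qm_sigma V E \<le> K" unfolding chi_qm_sigma_def by (rule Least_le)
  then show ?thesis using colorable real_K by auto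
qed

end
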